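(* Let $p\ge2$ be an integer, $t_*,\rho\in\mathbb{R}$, and let $Y\subset\mathbb{R}$ be a set that is not bounded above. Let $X\subset\mathbb{R}$ contain $t_*+y$ for every $y\in Y$ with $y>\rho$. Let $\Lambda: X-Y\to[0,\infty)$ satisfy $\Lambda(t_* )>0$ and \[ \lim_{y\in Y,\ y\to\infty}\Lambda(x_0-y)\,\Lambda(t_*+y-y_0)=0 \quad\text{for all } x_0\in X,\ y_0\in Y. \] If $\det(\Lambda(x_j-y_k))_{j,k=1}^p\ge0$ for all $\mathbf{x}\in\operatorname{inc}(X,p)$ and $\mathbf{y}\in\operatorname{inc}(Y,p)$, then the kernel $X\times Y\to\mathbb{R}$, $(x,y)\mapsto\Lambda(x-y)$, is $\mathrm{TN}_p$.
   Context: For a totally ordered set $X$ and integer $r \geq 1$, $\operatorname{inc}(X,r)$ denotes the set of $r$-tuples $(x_1,\dots,x_r) \in X^r$ with $x_1 < \cdots < x_r$. $X-Y=\{x-y:x\in X,y\in Y\}$. For $X,Y \subset \mathbb{R}$, a kernel $K : X \times Y \to \mathbb{R}$ is $\mathrm{TN}_p$ if $\det (K(x_j,y_k))_{j,k=1}^r \geq 0$ for all $1 \leq r \leq p$ and all $\mathbf{x} \in \operatorname{inc}(X,r)$, $\mathbf{y} \in \operatorname{inc}(Y,r)$. *)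

theory Defs
  imports Complex_Main "Jordan_Normal_Form.Determinant"
begin

definition inc :: "real set \<Rightarrow> nat \<Rightarrow> (nat \<Rightarrow> real) set" where
  "inc X r = {x. (\<forall>i<r. x i \<in> X) \<and> (\<forall>i j. i < j \<and> j < r \<longrightarrow> x i < x j)}"

definition setdiff_mink :: "real set \<Rightarrow> real set \<Rightarrow> real set" where
  "setdiff_mink X Y = {x - y | x y. x \<in> X \<and> y \<in> Y}"

definition TN :: "nat \<Rightarrow> real set \<Rightarrow> real set \<Rightarrow> (real \<Rightarrow> real \<Rightarrow> real) \<Rightarrow> bool" where
  "TN p X Y K \<longleftrightarrow> (\<forall>r. 1 \<le> r \<and> r \<le> p \<longrightarrow>
     (\<forall>x\<in>inc X r. \<forall>y\<in>inc Y r. det (mat r r (\<lambda>(j,k). K (x j) (y k))) \<ge> 0))"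

end

theory Submission imports Defs begin

text \<open>Downward induction on the order \<open>r\<close> of the minors. Given increasing \<open>x \<in> inc X r\<close> and
  \<open>y \<in> inc Y r\<close>, border them by \<open>tstar + z\<close> and \<open>z\<close> with \<open>z \<in> Y\<close> large; this gives a nonnegative
  \<open>(r+1)\<close>-minor. In its permutation expansion every term that does not fix the new index contains
  a factor \<open>\<Lambda> (x\<^sub>j - z) * \<Lambda> (tstar + z - y\<^sub>k)\<close>, which tends to \<open>0\<close>, so as \<open>z \<rightarrow> \<infinity>\<close> in \<open>Y\<close> the minor
  tends to \<open>\<Lambda> tstar\<close> times the \<open>r\<close>-minor, and \<open>\<Lambda> tstar > 0\<close> transfers nonnegativity.\<close>

lemma det_bordered_corner:
  fixes N :: "'a :: comm_ring_1 mat"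
  assumes N: "N \<in> carrier_mat (Suc r) (Suc r)"
    and last_row: "\<And>k. k < r \<Longrightarrow> N $$ (r, k) = 0"
  shows "det N = N $$ (r, r) * det (mat_delete N r r)"
proof -
  have "det N = (\<Sum>k<Suc r. N $$ (r, k) * cofactor N r k)"
    by (rule laplace_expansion_row[OF N]) simp
  also have "\<dots> = N $$ (r, r) * cofactor N r r"
    by (subst sum.remove[of _ r]) (auto simp: last_row intro!: sum.neutral)
  finally show ?thesis by (simp add: cofactor_def)
qed

lemma tendsto_prod_perm_bordered:
  fixes M :: "'b \<Rightarrow> 'a :: real_normed_field mat" and N :: "'a mat"
  assumes block: "\<And>z i k. i < r \<Longrightarrow> k < r \<Longrightarrow> M z $$ (i, k) = N $$ (i, k)"
    and corner: "\<And>z. M z $$ (r, r) = N $$ (r, r)"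
    and N_border: "\<And>k. k < r \<Longrightarrow> N $$ (r, k) = 0"
    and vanish: "\<And>j k. j < r \<Longrightarrow> k < r \<Longrightarrow> ((\<lambda>z. M z $$ (j, r) * M z $$ (r, k)) \<longlongrightarrow> 0) F"
    and \<pi>: "\<pi> permutes {0..<Suc r}"
  shows "((\<lambda>z. \<Prod>i = 0..<Suc r. M z $$ (i, \<pi> i)) \<longlongrightarrow> (\<Prod>i = 0..<Suc r. N $$ (i, \<pi> i))) F"
proof -
  have \<pi>_range: "\<pi> i < Suc r" if "i < Suc r" for i
    using permutes_in_image[OF \<pi>] that by auto
  have \<pi>_inj: "\<pi> a = \<pi> b \<Longrightarrow> a = b" for a b
    using permutes_inj[OF \<pi>] by (meson injD)
  show ?thesis
  proof (cases "\<pi> r = r")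
    case True
    have "M z $$ (i, \<pi> i) = N $$ (i, \<pi> i)" if "i < Suc r" for i z
    proof (cases "i = r")
      case False
      then have "\<pi> i \<noteq> r" using \<pi>_inj True by metis
      then show ?thesis using that False \<pi>_range[OF that] by (simp add: block)
    qed (simp add: True corner)
    then show ?thesis by simp
  next
    case False
    obtain j where j: "j < r" "\<pi> j = r"
      using permutes_surj[OF \<pi>] False \<pi>_range
      by (metis \<pi> atLeastLessThan_iff less_Suc_eq permutes_def zero_le)
    define k where "k = \<pi> r"
    have k: "k < r" using \<pi>_range[of r] False by (simp add: k_def)
    define R where "R = {0..<Suc r} - {r} - {j}"
    have split: "(\<Prod>i = 0..<Suc r. f i) = f j * f r * prod f R" for f :: "nat \<Rightarrow> 'a"
    proof -
      have "(\<Prod>i = 0..<Suc r. f i) = f r * prod f ({0..<Suc r} - {r})"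
        by (rule prod.remove) auto
      also have "prod f ({0..<Suc r} - {r}) = f j * prod f R"
        unfolding R_def using j by (subst prod.remove[of _ j]) auto
      finally show ?thesis by (simp add: mult_ac)
    qed
    have R_block: "i < r \<and> \<pi> i < r" if "i \<in> R" for i
    proof -
      have "i < r" "i \<noteq> j" using that by (auto simp: R_def)
      moreover from this have "\<pi> i \<noteq> r" using j \<pi>_inj by metis
      ultimately show ?thesis using \<pi>_range[of i] by auto
    qed
    have M_prod: "(\<Prod>i = 0..<Suc r. M z $$ (i, \<pi> i))
        = M z $$ (j, r) * M z $$ (r, k) * (\<Prod>i\<in>R. N $$ (i, \<pi> i))" for z
      unfolding split using j k_def R_block by (auto simp: block intro!: prod.cong)
    have N_prod: "(\<Prod>i = 0..<Suc r. N $$ (i, \<pi> i)) = 0"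
      unfolding split using k k_def by (simp add: N_border)
    show ?thesis
      unfolding M_prod N_prod by (rule tendsto_mult_left_zero[OF vanish[OF j(1) k]])
  qed
qed

lemma tendsto_det_bordered:
  fixes M :: "'b \<Rightarrow> 'a :: real_normed_field mat" and A :: "'a mat"
  assumes M: "\<And>z. M z \<in> carrier_mat (Suc r) (Suc r)" and A: "A \<in> carrier_mat r r"
    and block: "\<And>z i k. i < r \<Longrightarrow> k < r \<Longrightarrow> M z $$ (i, k) = A $$ (i, k)"
    and corner: "\<And>z. M z $$ (r, r) = c"
    and vanish: "\<And>j k. j < r \<Longrightarrow> k < r \<Longrightarrow> ((\<lambda>z. M z $$ (j, r) * M z $$ (r, k)) \<longlongrightarrow> 0) F"
  shows "((\<lambda>z. det (M z)) \<longlongrightarrow> c * det A) F"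
proof -
  define N where "N = mat (Suc r) (Suc r)
    (\<lambda>(i, k). if i < r \<and> k < r then A $$ (i, k) else if i = r \<and> k = r then c else 0)"
  have N: "N \<in> carrier_mat (Suc r) (Suc r)" by (simp add: N_def)
  have N_block: "\<And>i k. i < r \<Longrightarrow> k < r \<Longrightarrow> N $$ (i, k) = A $$ (i, k)"
    and N_corner: "N $$ (r, r) = c" and N_border: "\<And>k. k < r \<Longrightarrow> N $$ (r, k) = 0"
    by (simp_all add: N_def)
  have "mat_delete N r r = A"
    using A by (intro eq_matI) (auto simp: mat_delete_def N_def)
  then have det_N: "det N = c * det A"
    by (simp add: det_bordered_corner[OF N] N_border N_corner)
  have dims: "dim_row (M z) = Suc r" "dim_col (M z) = Suc r" for z
    using M[of z] by auto
  have "((\<lambda>z. \<Sum>\<pi> | \<pi> permutes {0..<Suc r}. of_int (sign \<pi>) * (\<Prod>i = 0..<Suc r. M z $$ (i, \<pi> i)))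
      \<longlongrightarrow> (\<Sum>\<pi> | \<pi> permutes {0..<Suc r}. of_int (sign \<pi>) * (\<Prod>i = 0..<Suc r. N $$ (i, \<pi> i)))) F"
    by (intro tendsto_sum tendsto_mult_left tendsto_prod_perm_bordered)
      (auto simp: block N_block corner N_corner N_border vanish)
  then have "((\<lambda>z. det (M z)) \<longlongrightarrow> det N) F"
    using N by (simp add: det_def dims)
  then show ?thesis by (simp add: det_N)
qed

lemma inf_at_top_principal_neq_bot:
  fixes Y :: "'a :: linorder set"
  assumes "\<not> bdd_above Y"
  shows "inf at_top (principal Y) \<noteq> bot"
proof
  assume "inf at_top (principal Y) = bot"
  then have "eventually (\<lambda>z. False) (inf at_top (principal Y))" by simp
  then have "eventually (\<lambda>z. z \<in> Y \<longrightarrow> False) at_top"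
    unfolding eventually_inf_principal .
  then obtain b where "\<forall>z\<ge>b. z \<notin> Y" by (auto simp: eventually_at_top_linorder)
  then have "bdd_above Y" by (meson bdd_above_def linorder_not_le order_less_imp_le)
  with assms show False by simp
qed

lemma inc_fun_upd_Suc:
  assumes "x \<in> inc X r" "a \<in> X" "\<And>i. i < r \<Longrightarrow> x i < a"
  shows "x(r := a) \<in> inc X (Suc r)"
  using assms unfolding inc_def by (auto simp: less_Suc_eq)

lemma minor_nonneg_of_succ:
  fixes \<Lambda> :: "real \<Rightarrow> real" and x y :: "nat \<Rightarrow> real"
  assumes unbounded: "\<not> bdd_above Y"
    and shift: "\<forall>y\<in>Y. y > \<rho> \<longrightarrow> tstar + y \<in> X"
    and pos: "\<Lambda> tstar > 0"
    and vanish: "\<forall>x0\<in>X. \<forall>y0\<in>Y.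
           ((\<lambda>y. \<Lambda> (x0 - y) * \<Lambda> (tstar + y - y0)) \<longlongrightarrow> 0) (inf at_top (principal Y))"
    and succ: "\<forall>x\<in>inc X (Suc r). \<forall>y\<in>inc Y (Suc r).
           det (mat (Suc r) (Suc r) (\<lambda>(j,k). \<Lambda> (x j - y k))) \<ge> 0"
    and x: "x \<in> inc X r" and y: "y \<in> inc Y r"
  shows "det (mat r r (\<lambda>(j,k). \<Lambda> (x j - y k))) \<ge> 0"
proof -
  define F where "F = inf (at_top :: real filter) (principal Y)"
  define M where "M = (\<lambda>z. mat (Suc r) (Suc r) (\<lambda>(j,k). \<Lambda> ((x(r := tstar + z)) j - (y(r := z)) k)))"
  define A where "A = mat r r (\<lambda>(j,k). \<Lambda> (x j - y k))"
  have xX: "\<And>i. i < r \<Longrightarrow> x i \<in> X" and yY: "\<And>i. i < r \<Longrightarrow> y i \<in> Y"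
    using x y unfolding inc_def by auto
  have "eventually (\<lambda>z. z > \<rho> \<and> (\<forall>i\<in>{..<r}. x i - tstar < z \<and> y i < z)) at_top"
    by (intro eventually_conj eventually_ball_finite ballI eventually_gt_at_top) auto
  then have "eventually (\<lambda>z. z \<in> Y \<longrightarrow> det (M z) \<ge> 0) at_top"
  proof (rule eventually_mono, intro impI)
    fix z assume "z > \<rho> \<and> (\<forall>i\<in>{..<r}. x i - tstar < z \<and> y i < z)" and "z \<in> Y"
    then have "x(r := tstar + z) \<in> inc X (Suc r)" "y(r := z) \<in> inc Y (Suc r)"
      using shift by (force intro!: inc_fun_upd_Suc x y)+
    then show "det (M z) \<ge> 0" using succ unfolding M_def by blast
  qed
  then have ev_nonneg: "eventually (\<lambda>z. det (M z) \<ge> 0) F"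
    unfolding F_def eventually_inf_principal .
  have "((\<lambda>z. det (M z)) \<longlongrightarrow> \<Lambda> tstar * det A) F"
    using vanish xX yY unfolding F_def
    by (intro tendsto_det_bordered[where A = A]) (auto simp: M_def A_def)
  from tendsto_lowerbound[OF this ev_nonneg] have "0 \<le> \<Lambda> tstar * det A"
    using inf_at_top_principal_neq_bot[OF unbounded] by (simp add: F_def)
  then show ?thesis using pos unfolding A_def by (simp add: zero_le_mult_iff)
qed

theorem mainTheorem19:
  fixes p :: nat and tstar \<rho> :: real and X Y :: "real set" and \<Lambda> :: "real \<Rightarrow> real"
  assumes "p \<ge> 2"
    and "\<not> bdd_above Y"
    and "\<forall>y\<in>Y. y > \<rho> \<longrightarrow> tstar + y \<in> X"
    and "\<forall>z\<in>setdiff_mink X Y. \<Lambda> z \<ge> 0"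
    and "\<Lambda> tstar > 0"
    and "\<forall>x0\<in>X. \<forall>y0\<in>Y.
           ((\<lambda>y. \<Lambda> (x0 - y) * \<Lambda> (tstar + y - y0)) \<longlongrightarrow> 0) (inf at_top (principal Y))"
    and "\<forall>x\<in>inc X p. \<forall>y\<in>inc Y p. det (mat p p (\<lambda>(j,k). \<Lambda> (x j - y k))) \<ge> 0"
  shows "TN p X Y (\<lambda>x y. \<Lambda> (x - y))"
  unfolding TN_def
proof (intro allI impI)
  fix r assume "1 \<le> r \<and> r \<le> p"
  then have "r \<le> p" by simp
  then show "\<forall>x\<in>inc X r. \<forall>y\<in>inc Y r. det (mat r r (\<lambda>(j,k). \<Lambda> (x j - y k))) \<ge> 0"
  proof (induction rule: inc_induct)
    case base
    show ?case using assms(7) .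
  next
    case (step n)
    then show ?case using minor_nonneg_of_succ[OF assms(2,3,5,6)] by blast
  qed
qed

end
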